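(* For every $N\ge1$ and positive integers $n_0,\dots,n_N$, the maximum diversity gain of the $(n_0,\dots,n_N)$ Rayleigh product channel satisfies $$\frac{\tilde n_0\tilde n_1}{2}<d(0)\le\tilde n_0\tilde n_1 .$$
   Context: $\tilde n_0\le\cdots\le\tilde n_N$ is the nondecreasing rearrangement of $(n_0,\dots,n_N)$, $c_i=1-i+\min_{k=1,\dots,N}\lfloor(\sum_{l=0}^{k}\tilde n_l-i)/k\rfloor$ for $i=1,\dots,\tilde n_0$, and $d(0)=\sum_{i=1}^{\tilde n_0}c_i$, which is the maximum diversity gain of the Rayleigh product channel $\mathbf y=\sqrt{\mathsf{SNR}/(n_1\cdots n_N)}\mathbf H_1\cdots\mathbf H_N\mathbf x+\mathbf z$ with independent i.i.d. $\mathcal{CN}(0,1)$ matrices $\mathbf H_i\in\mathbb C^{n_{i-1}\times n_i}$. *)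

theory Defs
  imports Complex_Main
begin

definition ntilde :: "nat \<Rightarrow> (nat \<Rightarrow> nat) \<Rightarrow> nat \<Rightarrow> nat" where
  "ntilde N n l = sort (map n [0..<Suc N]) ! l"

definition cdiv :: "nat \<Rightarrow> (nat \<Rightarrow> nat) \<Rightarrow> nat \<Rightarrow> int" where
  "cdiv N n i = 1 - int i +
     Min ((\<lambda>k. \<lfloor>(real (\<Sum>l=0..k. ntilde N n l) - real i) / real k\<rfloor>) ` {1..N})"

definition d0 :: "nat \<Rightarrow> (nat \<Rightarrow> nat) \<Rightarrow> int" where
  "d0 N n = (\<Sum>i=1..ntilde N n 0. cdiv N n i)"

end

theory Submission
  imports Defs
begin

(* Write a = ntilde_0 and b = ntilde_1 (so a <= b) and S_k = ntilde_0 + ... + ntilde_k.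
   The proof bounds every summand c_i of d(0) from both sides:
   - the k = 1 term of the minimum gives  c_i <= 1 - i + (a + b - i) = a + b + 1 - 2i;
   - since ntilde_l >= b for l >= 1, we have S_k >= a + k b, so for i <= a every
     term of the minimum is at least b, whence  c_i >= b + 1 - i.
   Summing over i = 1..a gives  d(0) <= a b  and  2 d(0) >= 2a(b+1) - a(a+1) = a b + a(b - a + 1),
   which exceeds a b because a > 0 and b >= a. *)

lemma ntilde_mono:
  assumes "i \<le> j" "j \<le> N"
  shows "ntilde N n i \<le> ntilde N n j"
  unfolding ntilde_def using assms by (intro sorted_nth_mono) auto

(* Every entry of the rearrangement is one of the n_i, hence positive when all n_i are. *)
lemma ntilde_pos:
  assumes "l \<le> N" and "\<And>i. i \<le> N \<Longrightarrow> n i > 0"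
  shows "ntilde N n l > 0"
proof -
  have "ntilde N n l \<in> set (sort (map n [0..<Suc N]))"
    unfolding ntilde_def using assms(1) by (intro nth_mem) simp
  then have "ntilde N n l \<in> n ` {0..N}" by auto
  with assms(2) show ?thesis by auto
qed

lemma ntilde_partial_sum_lower:
  assumes "1 \<le> k" "k \<le> N"
  shows "ntilde N n 0 + k * ntilde N n 1 \<le> (\<Sum>l=0..k. ntilde N n l)"
proof -
  have "k * ntilde N n 1 = (\<Sum>l=1..k. ntilde N n 1)" by simp
  also have "\<dots> \<le> (\<Sum>l=1..k. ntilde N n l)"
    using assms by (intro sum_mono ntilde_mono) auto
  finally show ?thesis by (simp add: sum.atLeast_Suc_atMost)
qed

lemma floor_divide_lower:
  assumes "k > 0" and "real k * b \<le> x"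
  shows "\<lfloor>b\<rfloor> \<le> \<lfloor>x / real k\<rfloor>"
  using assms by (intro floor_mono) (simp add: pos_le_divide_eq mult.commute)

(* Upper bound for c_i, from the k = 1 term of the minimum. *)
lemma cdiv_upper:
  assumes "N \<ge> 1"
  shows "cdiv N n i \<le> int (ntilde N n 0) + int (ntilde N n 1) + 1 - 2 * int i"
proof -
  let ?f = "\<lambda>k. \<lfloor>(real (\<Sum>l=0..k. ntilde N n l) - real i) / real k\<rfloor>"
  have "Min (?f ` {1..N}) \<le> ?f 1" using assms by (intro Min_le finite_imageI imageI) auto
  also have "?f 1 = \<lfloor>real_of_int (int (ntilde N n 0) + int (ntilde N n 1) - int i)\<rfloor>"
    by simp
  also have "\<dots> = int (ntilde N n 0) + int (ntilde N n 1) - int i"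
    by (rule floor_of_int)
  finally show ?thesis unfolding cdiv_def by simp
qed

(* Lower bound for c_i when i <= ntilde_0: every term of the minimum is at least ntilde_1. *)
lemma cdiv_lower:
  assumes "N \<ge> 1" and "i \<le> ntilde N n 0"
  shows "int (ntilde N n 1) + 1 - int i \<le> cdiv N n i"
proof -
  let ?f = "\<lambda>k. \<lfloor>(real (\<Sum>l=0..k. ntilde N n l) - real i) / real k\<rfloor>"
  have "int (ntilde N n 1) \<le> ?f k" if k: "k \<in> {1..N}" for k
  proof -
    have "ntilde N n 0 + k * ntilde N n 1 \<le> (\<Sum>l=0..k. ntilde N n l)"
      using k by (intro ntilde_partial_sum_lower) auto
    then have "real (ntilde N n 0) + real k * real (ntilde N n 1) \<le> real (\<Sum>l=0..k. ntilde N n l)"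
      by (metis of_nat_add of_nat_le_iff of_nat_mult)
    moreover have "real i \<le> real (ntilde N n 0)" using assms(2) by simp
    ultimately have "real k * real (ntilde N n 1) \<le> real (\<Sum>l=0..k. ntilde N n l) - real i"
      by linarith
    then have "\<lfloor>real (ntilde N n 1)\<rfloor> \<le> ?f k"
      using k by (intro floor_divide_lower) auto
    then show ?thesis by simp
  qed
  then have "int (ntilde N n 1) \<le> Min (?f ` {1..N})"
    using assms(1) by (subst Min_ge_iff) auto
  then show ?thesis unfolding cdiv_def by simp
qed

lemma sum_linear_1: "(\<Sum>i=1..m. (c::int) + 1 - 2 * int i) = int m * c - int m * int m"
  by (induction m) (auto simp: algebra_simps)

lemma sum_linear_2: "2 * (\<Sum>i=1..m. (c::int) + 1 - int i) = 2 * int m * (c + 1) - int m * (int m + 1)"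
  by (induction m) (auto simp: algebra_simps)

lemma d0_upper:
  assumes "N \<ge> 1"
  shows "d0 N n \<le> int (ntilde N n 0) * int (ntilde N n 1)"
proof -
  let ?a = "ntilde N n 0" and ?b = "ntilde N n 1"
  have "d0 N n \<le> (\<Sum>i=1..?a. int ?a + int ?b + 1 - 2 * int i)"
    unfolding d0_def using assms by (intro sum_mono cdiv_upper)
  also have "\<dots> = int ?a * int ?b"
    using sum_linear_1[where m = ?a and c = "int ?a + int ?b"] by (simp add: algebra_simps)
  finally show ?thesis .
qed

lemma d0_lower:
  assumes "N \<ge> 1"
  shows "2 * int (ntilde N n 0) * (int (ntilde N n 1) + 1)
           - int (ntilde N n 0) * (int (ntilde N n 0) + 1) \<le> 2 * d0 N n"
proof -
  let ?a = "ntilde N n 0" and ?b = "ntilde N n 1"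
  have "(\<Sum>i=1..?a. int ?b + 1 - int i) \<le> d0 N n"
    unfolding d0_def using assms by (intro sum_mono cdiv_lower) auto
  then show ?thesis using sum_linear_2[where m = ?a and c = "int ?b"] by linarith
qed

theorem corollary3:
  fixes N :: nat and n :: "nat \<Rightarrow> nat"
  assumes "N \<ge> 1"
    and "\<And>i. i \<le> N \<Longrightarrow> n i > 0"
  shows "real (ntilde N n 0 * ntilde N n 1) / 2 < real_of_int (d0 N n)
       \<and> d0 N n \<le> int (ntilde N n 0 * ntilde N n 1)"
proof -
  let ?a = "ntilde N n 0" and ?b = "ntilde N n 1"
  have a_pos: "?a > 0" using ntilde_pos[OF _ assms(2)] by simp
  have a_le_b: "?a \<le> ?b" using assms(1) by (intro ntilde_mono) auto
  have "int ?a * int ?a \<le> int ?a * int ?b" using a_le_b by (simp add: mult_left_mono)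
  with a_pos have "int ?a * int ?a < int ?a * int ?b + int ?a" by linarith
  with d0_lower[OF assms(1), where n = n] have "int ?a * int ?b < 2 * d0 N n"
    by (simp add: algebra_simps)
  then have "real (?a * ?b) < 2 * real_of_int (d0 N n)"
    by (metis of_int_less_iff of_int_mult of_int_of_nat_eq of_int_numeral of_nat_mult)
  with d0_upper[OF assms(1), where n = n] show ?thesis by simp
qed

end
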